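(* Let $S\in\mathbb{R}^{n\times n}$, $n=2m$, be nonsingular and skew-symmetric with eigenvalues $\pm\mathrm{i}\sigma_j$, $j=1,\ldots,m$, where $\sigma_1>\sigma_2\ge\cdots\ge\sigma_m>0$, and let $u_j,v_j\in\mathbb{R}^n$ be such that $\{u_1,\ldots,u_m,v_1,\ldots,v_m\}$ is an orthonormal basis of $\mathbb{R}^n$ and $\frac{\sqrt2}{2}(u_j\pm\mathrm{i}v_j)$ are eigenvectors of $S$ for $\pm\mathrm{i}\sigma_j$ (equivalently $Sv_j=\sigma_ju_j$, $Su_j=-\sigma_jv_j$). Let $q_0\in\mathbb{R}^n$ be a unit vector written as $$q_0=\sum_{i=1}^m\big[\alpha_i(u_i+\mathrm{i}v_i)+\bar\alpha_i(u_i-\mathrm{i}v_i)\big]=2\sum_{i=1}^m(\alpha_{i,1}u_i-\alpha_{i,2}v_i),$$ with $\alpha_i=\alpha_{i,1}+\mathrm{i}\alpha_{i,2}$, and assume $\alpha_1\neq0$. Define $q_{2k+1}=Sq_{2k}/\|Sq_{2k}\|$, $q_{2k+2}=-Sq_{2k+1}/\|Sq_{2k+1}\|$ and $\rho_k=q_{2k+1}^TSq_{2k+2}$ for $k=0,1,\ldots$. Set $$x_o=\frac{-1}{|\alpha_1|}(\alpha_{1,1}v_1+\alpha_{1,2}u_1),\qquad x_e=\frac{1}{|\alpha_1|}(\alpha_{1,1}u_1-\alpha_{1,2}v_1).$$ Then $x_o,x_e$ are orthonormal, $\frac{\sqrt2}{2}(x_o\pm\mathrm{i}x_e)$ are unit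 eigenvectors of $S$ for the eigenvalues $\pm\mathrm{i}\sigma_1$, and for all $k\ge1$: $$|\tan\angle(q_{2k},x_e)|\le\Big(\frac{\sigma_2}{\sigma_1}\Big)^{2k}|\tan\angle(q_0,x_e)|,$$ $$|\tan\angle(q_{2k-1},x_o)|\le\Big(\frac{\sigma_2}{\sigma_1}\Big)^{2(k-1)}|\tan\angle(Sq_0,x_o)|,$$ $$|\tan\angle(q_{2k-1},x_o)|\le\Big(\frac{\sigma_2}{\sigma_1}\Big)^{2k-1}|\tan\angle(q_0,x_e)|.$$ Moreover, $$|\rho_k-\sigma_1|\le\frac12\tan^2\angle(q_{2k+1},x_o)\,\sigma_1+O\big(\tan^4\angle(q_{2k+1},x_o)\big)=O\Big(\Big(\frac{\sigma_2}{\sigma_1}\Big)^{4k}\Big).$$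
   Context: $\|\cdot\|$ is the Euclidean norm; $\angle(x,y)$ denotes the acute angle between real vectors $x,y$, i.e. $\cos\angle(x,y)=|x^Ty|/(\|x\|\|y\|)$. The iteration defining $q_k$ and $\rho_k$ is the skew-symmetric power (SSP) method, which alternately applies $S$ and $S^T=-S$ with normalization. *)

theory Defs
  imports "HOL-Analysis.Analysis" "HOL-Library.Landau_Symbols"
begin

definition vangle :: "real^'n \<Rightarrow> real^'n \<Rightarrow> real" where
  "vangle x y = arccos (\<bar>x \<bullet> y\<bar> / (norm x * norm y))"

fun ssp :: "real^'n^'n \<Rightarrow> real^'n \<Rightarrow> nat \<Rightarrow> real^'n" where
  "ssp S q0 0 = q0"
| "ssp S q0 (Suc j) =
     (if even j then 1 else -1) *\<^sub>R ((1 / norm (S *v ssp S q0 j)) *\<^sub>R (S *v ssp S q0 j))"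

definition ssp_rho :: "real^'n^'n \<Rightarrow> real^'n \<Rightarrow> nat \<Rightarrow> real" where
  "ssp_rho S q0 k = ssp S q0 (2*k+1) \<bullet> (S *v ssp S q0 (2*k+2))"

definition cmat :: "real^'n^'n \<Rightarrow> complex^'n^'n" where
  "cmat S = (\<chi> i j. complex_of_real (S $ i $ j))"

definition cvec :: "real^'n \<Rightarrow> real^'n \<Rightarrow> complex^'n" where
  "cvec x y = (\<chi> i. Complex (x $ i) (y $ i))"

end

theory Submission
  imports Defs
begin

(*
  In the orthonormal basis u_i, v_i the matrix S acts on each plane span{u_i, v_i} as a
  quarter turn scaled by sigma_i.  Hence the unnormalised iterate V_j = (+-) S^j q0 has
  coordinates sigma_i^j times a fixed pair built from alpha_i: its component along x_e (j even)
  or x_o (j odd) is 2 sigma_1^j |alpha_1|, and the rest has squared length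
  4 sum_{i>=2} sigma_i^(2j) |alpha_i|^2.  So the tangent of the angle is exactly
  sqrt (sum_{i>=2} sigma_i^(2j) |alpha_i|^2) / (sigma_1^j |alpha_1|), which shrinks at least
  by sigma_2/sigma_1 per step.  Skew-symmetry gives rho_k = |S q_(2k+1)| = |V_(2k+2)| / |V_(2k+1)|,
  whose square lies between sigma_1^2 / (1 + t^2) and sigma_1^2 for t = tan angle(q_(2k+1), x_o);
  thus |rho_k - sigma_1| <= t^2 sigma_1 / 2 and the O(t^4) remainder can be taken to be zero.
*)

lemma vangle_scaleR_left:
  assumes "0 < c"
  shows "vangle (c *\<^sub>R x) y = vangle x y"
  unfolding vangle_def using assms by (simp add: abs_mult)

lemma tan_vangle_unit:
  fixes x y :: "real^'n"
  assumes y: "norm y = 1" and pos: "0 < x \<bullet> y"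
  shows "tan (vangle x y) = sqrt ((norm x)\<^sup>2 - (x \<bullet> y)\<^sup>2) / (x \<bullet> y)"
proof -
  define d where "d = x \<bullet> y"
  have "d \<le> norm x" using norm_cauchy_schwarz[of x y] y by (simp add: d_def)
  then have nx: "0 < norm x" using pos d_def by linarith
  define c where "c = d / norm x"
  have c: "0 < c" "c \<le> 1" using nx pos \<open>d \<le> norm x\<close> by (auto simp: c_def d_def)
  have "vangle x y = arccos c" unfolding vangle_def c_def d_def using y pos by simp
  then have "tan (vangle x y) = sqrt (1 - c\<^sup>2) / c"
    using c by (simp add: tan_def sin_arccos)
  also have "sqrt (1 - c\<^sup>2) = sqrt ((norm x)\<^sup>2 - d\<^sup>2) / norm x"
    using nx by (simp add: c_def field_simps real_sqrt_divide)
  finally show ?thesis using nx by (simp add: c_def d_def)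
qed

lemma ssp_eq_sgn:
  assumes "V 0 = q0" and "norm q0 = 1"
    and V_Suc: "\<And>j. V (Suc j) = (if even j then 1 else -1) *\<^sub>R (S *v V j)"
  shows "ssp S q0 j = sgn (V j)"
proof (induction j)
  case 0
  then show ?case using assms(1,2) by (simp add: sgn_div_norm)
next
  case (Suc j)
  have sgn_eq: "(1 / norm w) *\<^sub>R w = sgn w" for w :: "real^'n"
    by (simp add: sgn_div_norm inverse_eq_divide)
  \<comment> \<open>\<open>sgn\<close> ignores positive factors, so the normalisations need not be tracked.\<close>
  have "S *v sgn (V j) = inverse (norm (V j)) *\<^sub>R (S *v V j)"
    by (simp add: sgn_div_norm matrix_vector_mult_scaleR)
  then have "sgn (S *v ssp S q0 j) = sgn (S *v V j)"
    using Suc by (cases "V j = 0") (simp_all add: sgn_scaleR)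
  then show ?case
    using V_Suc[of j] by (simp add: sgn_eq sgn_scaleR sgn_minus)
qed

lemma skew_inner_mult:
  fixes S :: "real^'n^'n"
  assumes "transpose S = - S"
  shows "x \<bullet> (S *v y) = - ((S *v x) \<bullet> y)"
proof -
  have "x v* S = (- S) *v x"
    using transpose_matrix_vector[of S x] assms by simp
  also have "\<dots> = - (S *v x)"
    by (simp add: vec_eq_iff matrix_vector_mult_def sum_negf)
  finally show ?thesis by (simp add: dot_lmul_matrix[symmetric])
qed

lemma ssp_rho_skew:
  assumes "transpose S = - S"
  shows "ssp_rho S q0 k = norm (S *v ssp S q0 (2*k+1))"
proof -
  define q where "q = ssp S q0 (2*k+1)"
  have "ssp S q0 (2*k+2) = - sgn (S *v q)"
    using ssp.simps(2)[of S q0 "2*k+1"] by (simp add: q_def sgn_div_norm inverse_eq_divide)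
  then have "ssp_rho S q0 k = - (q \<bullet> (S *v sgn (S *v q)))"
    unfolding ssp_rho_def q_def[symmetric]
    by (simp add: linear_neg[OF matrix_vector_mul_linear])
  also have "\<dots> = (S *v q) \<bullet> sgn (S *v q)"
    using skew_inner_mult[OF assms] by simp
  also have "\<dots> = norm (S *v q)"
    by (cases "S *v q = 0")
      (simp_all add: sgn_div_norm power2_norm_eq_inner[symmetric] power2_eq_square)
  finally show ?thesis by (simp add: q_def)
qed

lemma abs_sub_le_of_sq_bounds:
  fixes \<rho> \<sigma> t :: real
  assumes "0 \<le> \<rho>" "0 < \<sigma>" "0 \<le> t"
    and upper: "\<rho>\<^sup>2 \<le> \<sigma>\<^sup>2" and lower: "\<sigma>\<^sup>2 / (1 + t) \<le> \<rho>\<^sup>2"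
  shows "\<bar>\<rho> - \<sigma>\<bar> \<le> 1/2 * t * \<sigma>"
proof -
  have "\<rho> \<le> \<sigma>" using power2_le_imp_le[OF upper] assms(2) by simp
  moreover have "\<sigma> * (1 - t/2) \<le> \<rho>"
  proof (cases "t \<le> 2")
    case True
    \<comment> \<open>\<open>1 - t/2 \<le> 1 / sqrt (1 + t)\<close>\<close>
    have "(1 - t/2)\<^sup>2 * (1 + t) = 1 - t\<^sup>2 * (3 - t) / 4"
      by (simp add: power2_eq_square field_simps)
    moreover have "0 \<le> t\<^sup>2 * (3 - t)" using True by simp
    ultimately have "(1 - t/2)\<^sup>2 * (1 + t) \<le> 1" by linarith
    then have "\<sigma>\<^sup>2 * ((1 - t/2)\<^sup>2 * (1 + t)) \<le> \<sigma>\<^sup>2 * 1"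
      by (rule mult_left_mono) simp
    then have "(\<sigma> * (1 - t/2))\<^sup>2 \<le> \<sigma>\<^sup>2 / (1 + t)"
      using assms(3) by (simp add: power_mult_distrib pos_le_divide_eq mult.assoc)
    then have "(\<sigma> * (1 - t/2))\<^sup>2 \<le> \<rho>\<^sup>2" using lower by linarith
    then show ?thesis using power2_le_imp_le assms(1) by blast
  next
    case False
    then have "\<sigma> * (1 - t/2) < 0" using assms(2) by (intro mult_pos_neg) auto
    then show ?thesis using assms(1) by linarith
  qed
  ultimately show ?thesis by (simp add: abs_le_iff algebra_simps)
qed

lemma cmat_mult_cvec: "cmat S *v cvec x y = cvec (S *v x) (S *v y)"
  by (simp add: vec_eq_iff matrix_vector_mult_def cmat_def cvec_def complex_eq_iff)

lemma norm_cvec: "norm (cvec x y) = sqrt ((norm x)\<^sup>2 + (norm y)\<^sup>2)"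
  by (simp add: norm_vec_def L2_set_def sum_nonneg sum.distrib cvec_def cmod_power2)

lemma of_real_scalar_mult_cvec: "complex_of_real c *s cvec x y = cvec (c *\<^sub>R x) (c *\<^sub>R y)"
  by (simp add: vec_eq_iff cvec_def vector_scalar_mult_def complex_eq_iff)

lemma norm_sqrt2_half_cvec:
  assumes "norm x = 1" "norm y = 1"
  shows "norm (complex_of_real (sqrt 2 / 2) *s cvec x y) = 1"
  unfolding of_real_scalar_mult_cvec norm_cvec using assms by (simp add: power_mult_distrib power_divide)

lemma cvec_eigenvector:
  assumes "S *v x = - (s *\<^sub>R y)" "S *v y = s *\<^sub>R x"
  shows "cmat S *v (c *s cvec x y) = (\<i> * complex_of_real s) *s (c *s cvec x y)"
  unfolding vector_scalar_commute cmat_mult_cvec assms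
  by (simp add: vec_eq_iff cvec_def complex_eq_iff algebra_simps)

locale skew_pairs =
  fixes S :: "real^'n^'n" and m :: nat and \<sigma> :: "nat \<Rightarrow> real" and u v :: "nat \<Rightarrow> real^'n"
  assumes orth_uu: "\<forall>i\<in>{1..m}. \<forall>j\<in>{1..m}. u i \<bullet> u j = (if i = j then 1 else 0)"
    and orth_vv: "\<forall>i\<in>{1..m}. \<forall>j\<in>{1..m}. v i \<bullet> v j = (if i = j then 1 else 0)"
    and orth_uv: "\<forall>i\<in>{1..m}. \<forall>j\<in>{1..m}. u i \<bullet> v j = 0"
    and eig_v: "\<forall>j\<in>{1..m}. S *v v j = \<sigma> j *\<^sub>R u j"
    and eig_u: "\<forall>j\<in>{1..m}. S *v u j = - (\<sigma> j *\<^sub>R v j)"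
begin

definition uv_comb :: "(nat \<Rightarrow> real) \<Rightarrow> (nat \<Rightarrow> real) \<Rightarrow> real^'n" where
  "uv_comb A B = (\<Sum>i\<in>{1..m}. A i *\<^sub>R u i + B i *\<^sub>R v i)"

lemma matrix_vector_mult_uv_comb:
  "S *v uv_comb A B = uv_comb (\<lambda>i. \<sigma> i * B i) (\<lambda>i. - \<sigma> i * A i)"
proof -
  have "S *v uv_comb A B = (\<Sum>i\<in>{1..m}. A i *\<^sub>R (S *v u i) + B i *\<^sub>R (S *v v i))"
    unfolding uv_comb_def
    by (simp add: linear_sum[OF matrix_vector_mul_linear] matrix_vector_right_distrib
        matrix_vector_mult_scaleR)
  also have "\<dots> = uv_comb (\<lambda>i. \<sigma> i * B i) (\<lambda>i. - \<sigma> i * A i)"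
    unfolding uv_comb_def by (rule sum.cong) (use eig_u eig_v in \<open>auto simp: algebra_simps\<close>)
  finally show ?thesis .
qed

lemma scaleR_uv_comb: "c *\<^sub>R uv_comb A B = uv_comb (\<lambda>i. c * A i) (\<lambda>i. c * B i)"
  unfolding uv_comb_def by (simp add: scaleR_sum_right algebra_simps)

lemma inner_u_uv_comb:
  assumes "i \<in> {1..m}"
  shows "u i \<bullet> uv_comb A B = A i"
proof -
  have "u i \<bullet> uv_comb A B = (\<Sum>j\<in>{1..m}. if j = i then A j else 0)"
    unfolding uv_comb_def inner_sum_right
    by (rule sum.cong) (use assms orth_uu orth_uv in \<open>auto simp: inner_add_right\<close>)
  then show ?thesis using assms by simp
qed

lemma inner_v_uv_comb:
  assumes "i \<in> {1..m}"
  shows "v i \<bullet> uv_comb A B = B i"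
proof -
  have "v i \<bullet> uv_comb A B = (\<Sum>j\<in>{1..m}. if j = i then B j else 0)"
    unfolding uv_comb_def inner_sum_right
    by (rule sum.cong) (use assms orth_vv orth_uv in \<open>auto simp: inner_add_right inner_commute\<close>)
  then show ?thesis using assms by simp
qed

lemma norm_uv_comb_sq: "(norm (uv_comb A B))\<^sup>2 = (\<Sum>i\<in>{1..m}. (A i)\<^sup>2 + (B i)\<^sup>2)"
proof -
  have "uv_comb A B \<bullet> uv_comb A B
      = (\<Sum>i\<in>{1..m}. A i * (u i \<bullet> uv_comb A B) + B i * (v i \<bullet> uv_comb A B))"
    by (simp only: uv_comb_def[of A B] inner_sum_left inner_add_left inner_scaleR_left)
  also have "\<dots> = (\<Sum>i\<in>{1..m}. (A i)\<^sup>2 + (B i)\<^sup>2)"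
    by (rule sum.cong) (auto simp: inner_u_uv_comb inner_v_uv_comb power2_eq_square)
  finally show ?thesis by (simp add: power2_norm_eq_inner)
qed

end

locale ssp_setting = skew_pairs S m \<sigma> u v
  for S :: "real^'n^'n" and m \<sigma> u v +
  fixes a1 a2 :: "nat \<Rightarrow> real" and q0 :: "real^'n"
  assumes m2: "2 \<le> m"
    and skew: "transpose S = - S"
    and sig12: "\<sigma> 2 < \<sigma> 1"
    and sigmono: "\<forall>j. 2 \<le> j \<and> j < m \<longrightarrow> \<sigma> (j+1) \<le> \<sigma> j"
    and sigpos: "\<forall>j\<in>{1..m}. 0 < \<sigma> j"
    and q0_unit: "norm q0 = 1"
    and q0_expand: "q0 = 2 *\<^sub>R (\<Sum>i\<in>{1..m}. a1 i *\<^sub>R u i - a2 i *\<^sub>R v i)"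
    and alpha1: "(a1 1, a2 1) \<noteq> (0, 0)"
begin

definition alpha_sq :: "nat \<Rightarrow> real" where
  "alpha_sq i = (a1 i)\<^sup>2 + (a2 i)\<^sup>2"

definition alpha1_norm :: real where
  "alpha1_norm = sqrt (alpha_sq 1)"

(* The iterates before normalisation: V j = +-S^j q0, with the signs of the iteration. *)
definition V :: "nat \<Rightarrow> real^'n" where
  "V j = uv_comb (\<lambda>i. 2 * \<sigma> i ^ j * (if even j then a1 i else - a2 i))
                 (\<lambda>i. - 2 * \<sigma> i ^ j * (if even j then a2 i else a1 i))"

definition tail_mass :: "nat \<Rightarrow> real" where
  "tail_mass j = (\<Sum>i\<in>{2..m}. \<sigma> i ^ (2*j) * alpha_sq i)"

definition tan_iter :: "nat \<Rightarrow> real" where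
  "tan_iter j = sqrt (tail_mass j) / (\<sigma> 1 ^ j * alpha1_norm)"

definition x_even :: "real^'n" where
  "x_even = (1 / alpha1_norm) *\<^sub>R (a1 1 *\<^sub>R u 1 - a2 1 *\<^sub>R v 1)"

definition x_odd :: "real^'n" where
  "x_odd = (-1 / alpha1_norm) *\<^sub>R (a1 1 *\<^sub>R v 1 + a2 1 *\<^sub>R u 1)"

lemma alpha_sq_nonneg: "0 \<le> alpha_sq i"
  by (simp add: alpha_sq_def)

lemma alpha_sq_1_pos: "0 < alpha_sq 1"
  using alpha1 by (simp add: alpha_sq_def sum_power2_gt_zero_iff)

lemma alpha1_norm_pos: "0 < alpha1_norm"
  using alpha_sq_1_pos by (simp add: alpha1_norm_def)

lemma alpha1_norm_sq: "alpha1_norm\<^sup>2 = alpha_sq 1"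
  using alpha_sq_1_pos by (simp add: alpha1_norm_def)

lemma sigma1_pos: "0 < \<sigma> 1" and sigma2_pos: "0 < \<sigma> 2"
  using sigpos m2 by auto

lemma sigma_le_sigma2:
  assumes "2 \<le> i" "i \<le> m"
  shows "\<sigma> i \<le> \<sigma> 2"
  using assms
proof (induction i rule: dec_induct)
  case (step i)
  then show ?case using sigmono by force
qed simp

lemma sum_split_first: "(\<Sum>i\<in>{1..m}. f i) = f 1 + (\<Sum>i\<in>{2..m}. f i)"
  using m2 by (simp add: sum.atLeast_Suc_atMost numeral_2_eq_2)

lemma V_0: "V 0 = q0"
  unfolding q0_expand V_def uv_comb_def scaleR_sum_right
  by (rule sum.cong) (auto simp: algebra_simps)

lemma V_Suc: "V (Suc j) = (if even j then 1 else -1) *\<^sub>R (S *v V j)"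
  unfolding V_def matrix_vector_mult_uv_comb scaleR_uv_comb
  by (rule arg_cong2[where f = uv_comb]) (auto simp: fun_eq_iff)

lemma norm_V_sq: "(norm (V j))\<^sup>2 = 4 * (\<sigma> 1 ^ (2*j) * alpha_sq 1 + tail_mass j)"
proof -
  have "(norm (V j))\<^sup>2 = 4 * (\<Sum>i\<in>{1..m}. \<sigma> i ^ (2*j) * alpha_sq i)"
    unfolding V_def norm_uv_comb_sq sum_distrib_left
    by (rule sum.cong) (auto simp: alpha_sq_def power_mult_distrib power_mult algebra_simps)
  also have "\<dots> = 4 * (\<sigma> 1 ^ (2*j) * alpha_sq 1 + tail_mass j)"
    unfolding sum_split_first tail_mass_def ..
  finally show ?thesis .
qed

lemma tail_mass_nonneg: "0 \<le> tail_mass j"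
  unfolding tail_mass_def
  by (intro sum_nonneg mult_nonneg_nonneg alpha_sq_nonneg) (simp add: power_mult)

lemma V_nonzero: "V j \<noteq> 0"
proof -
  have "0 < \<sigma> 1 ^ (2*j) * alpha_sq 1" using sigma1_pos alpha_sq_1_pos by simp
  then have "0 < (norm (V j))\<^sup>2"
    unfolding norm_V_sq using tail_mass_nonneg[of j] by (simp add: add_pos_nonneg)
  then show ?thesis by auto
qed

lemma ssp_eq_sgn_V: "ssp S q0 j = sgn (V j)"
  using ssp_eq_sgn[OF V_0 q0_unit V_Suc] .

lemma uv_1: "u 1 \<bullet> u 1 = 1" "v 1 \<bullet> v 1 = 1" "u 1 \<bullet> v 1 = 0" "v 1 \<bullet> u 1 = 0"
  using orth_uu orth_vv orth_uv m2 by (auto simp: inner_commute)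

lemma norm_x_even: "norm x_even = 1"
proof -
  have "norm (a1 1 *\<^sub>R u 1 - a2 1 *\<^sub>R v 1) = alpha1_norm"
    unfolding norm_eq_sqrt_inner alpha1_norm_def alpha_sq_def
    by (simp add: inner_diff_left inner_diff_right uv_1 power2_eq_square del: One_nat_def)
  then show ?thesis using alpha1_norm_pos by (simp add: x_even_def)
qed

lemma norm_x_odd: "norm x_odd = 1"
proof -
  have "norm (a1 1 *\<^sub>R v 1 + a2 1 *\<^sub>R u 1) = alpha1_norm"
    unfolding norm_eq_sqrt_inner alpha1_norm_def alpha_sq_def
    by (simp add: inner_add_left inner_add_right uv_1 power2_eq_square del: One_nat_def)
  then show ?thesis using alpha1_norm_pos by (simp add: x_odd_def)
qed

lemma inner_x_odd_x_even: "x_odd \<bullet> x_even = 0"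
  unfolding x_odd_def x_even_def by (simp add: inner_add_left inner_diff_right uv_1 algebra_simps del: One_nat_def)

lemma S_u_1: "S *v u 1 = - (\<sigma> 1 *\<^sub>R v 1)" and S_v_1: "S *v v 1 = \<sigma> 1 *\<^sub>R u 1"
  using eig_u eig_v m2 by simp_all

lemma S_x_odd: "S *v x_odd = - (\<sigma> 1 *\<^sub>R x_even)"
  and S_x_even: "S *v x_even = \<sigma> 1 *\<^sub>R x_odd"
  unfolding x_odd_def x_even_def
  by (simp_all only: matrix_vector_mult_scaleR matrix_vector_right_distrib
      matrix_vector_mult_diff_distrib S_u_1 S_v_1) (simp_all add: algebra_simps)

lemma inner_V_x_even:
  assumes "even j"
  shows "V j \<bullet> x_even = 2 * \<sigma> 1 ^ j * alpha1_norm"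
proof -
  have 1: "1 \<in> {1..m}" using m2 by simp
  have "V j \<bullet> x_even = (1 / alpha1_norm) * (a1 1 * (u 1 \<bullet> V j) - a2 1 * (v 1 \<bullet> V j))"
    unfolding x_even_def by (simp add: inner_diff_right inner_commute)
  also have "\<dots> = (1 / alpha1_norm) * (2 * \<sigma> 1 ^ j * alpha_sq 1)"
    unfolding V_def inner_u_uv_comb[OF 1] inner_v_uv_comb[OF 1]
    using assms by (simp add: alpha_sq_def power2_eq_square algebra_simps)
  also have "\<dots> = 2 * \<sigma> 1 ^ j * alpha1_norm"
    using alpha1_norm_pos alpha1_norm_sq by (simp add: field_simps power2_eq_square)
  finally show ?thesis .
qed

lemma inner_V_x_odd:
  assumes "odd j"
  shows "V j \<bullet> x_odd = 2 * \<sigma> 1 ^ j * alpha1_norm"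
proof -
  have 1: "1 \<in> {1..m}" using m2 by simp
  have "V j \<bullet> x_odd = (-1 / alpha1_norm) * (a1 1 * (v 1 \<bullet> V j) + a2 1 * (u 1 \<bullet> V j))"
    unfolding x_odd_def by (simp add: inner_add_right inner_commute)
  also have "\<dots> = (1 / alpha1_norm) * (2 * \<sigma> 1 ^ j * alpha_sq 1)"
    unfolding V_def inner_u_uv_comb[OF 1] inner_v_uv_comb[OF 1]
    using assms by (simp add: alpha_sq_def power2_eq_square algebra_simps)
  also have "\<dots> = 2 * \<sigma> 1 ^ j * alpha1_norm"
    using alpha1_norm_pos alpha1_norm_sq by (simp add: field_simps power2_eq_square)
  finally show ?thesis .
qed

lemma tan_vangle_V:
  assumes "norm y = 1" "V j \<bullet> y = 2 * \<sigma> 1 ^ j * alpha1_norm"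
  shows "tan (vangle (V j) y) = tan_iter j"
proof -
  have pos: "0 < 2 * \<sigma> 1 ^ j * alpha1_norm" using sigma1_pos alpha1_norm_pos by simp
  have "(norm (V j))\<^sup>2 - (2 * \<sigma> 1 ^ j * alpha1_norm)\<^sup>2 = 2\<^sup>2 * tail_mass j"
    unfolding norm_V_sq using alpha1_norm_sq by (simp add: power_mult_distrib power_mult algebra_simps)
  then have "tan (vangle (V j) y) = 2 * sqrt (tail_mass j) / (2 * \<sigma> 1 ^ j * alpha1_norm)"
    using tan_vangle_unit[of y "V j"] assms pos by (simp add: real_sqrt_mult)
  then show ?thesis by (simp add: tan_iter_def)
qed

lemma vangle_ssp: "vangle (ssp S q0 j) y = vangle (V j) y"
  unfolding ssp_eq_sgn_V sgn_div_norm using V_nonzero by (simp add: vangle_scaleR_left)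

lemma tan_vangle_ssp_even: "even j \<Longrightarrow> tan (vangle (ssp S q0 j) x_even) = tan_iter j"
  by (simp add: vangle_ssp tan_vangle_V norm_x_even inner_V_x_even)

lemma tan_vangle_ssp_odd: "odd j \<Longrightarrow> tan (vangle (ssp S q0 j) x_odd) = tan_iter j"
  by (simp add: vangle_ssp tan_vangle_V norm_x_odd inner_V_x_odd)

lemma tail_mass_decay: "tail_mass (p + d) \<le> \<sigma> 2 ^ (2*d) * tail_mass p"
  unfolding tail_mass_def sum_distrib_left
proof (rule sum_mono)
  fix i assume i: "i \<in> {2..m}"
  then have "0 < \<sigma> i" "\<sigma> i \<le> \<sigma> 2" using sigpos sigma_le_sigma2 by auto
  then have "\<sigma> i ^ (2*d) * (\<sigma> i ^ (2*p) * alpha_sq i) \<le> \<sigma> 2 ^ (2*d) * (\<sigma> i ^ (2*p) * alpha_sq i)"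
    by (intro mult_right_mono power_mono mult_nonneg_nonneg alpha_sq_nonneg) auto
  then show "\<sigma> i ^ (2 * (p + d)) * alpha_sq i \<le> \<sigma> 2 ^ (2*d) * (\<sigma> i ^ (2*p) * alpha_sq i)"
    by (simp add: power_add algebra_simps)
qed

lemma tan_iter_nonneg: "0 \<le> tan_iter j"
  unfolding tan_iter_def using sigma1_pos alpha1_norm_pos tail_mass_nonneg by simp

lemma tan_iter_decay: "tan_iter (p + d) \<le> (\<sigma> 2 / \<sigma> 1) ^ d * tan_iter p"
proof -
  have "sqrt (tail_mass (p + d)) \<le> sqrt ((\<sigma> 2 ^ d)\<^sup>2 * tail_mass p)"
    using tail_mass_decay by (simp add: power_mult[symmetric] mult.commute)
  also have "\<dots> = \<sigma> 2 ^ d * sqrt (tail_mass p)"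
    using sigma2_pos by (simp add: real_sqrt_mult)
  finally have "tan_iter (p + d) \<le> \<sigma> 2 ^ d * sqrt (tail_mass p) / (\<sigma> 1 ^ (p + d) * alpha1_norm)"
    unfolding tan_iter_def using sigma1_pos alpha1_norm_pos by (simp add: divide_right_mono)
  also have "\<dots> = (\<sigma> 2 / \<sigma> 1) ^ d * tan_iter p"
    unfolding tan_iter_def using sigma1_pos by (simp add: power_divide power_add field_simps)
  finally show ?thesis .
qed

lemma ssp_rho_eq_quotient: "ssp_rho S q0 k = norm (V (2*k+2)) / norm (V (2*k+1))"
proof -
  have "S *v ssp S q0 (2*k+1) = inverse (norm (V (2*k+1))) *\<^sub>R (S *v V (2*k+1))"
    unfolding ssp_eq_sgn_V sgn_div_norm by (simp add: matrix_vector_mult_scaleR)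
  moreover have "norm (S *v V (2*k+1)) = norm (V (2*k+2))"
    using V_Suc[of "2*k+1"] by simp
  ultimately show ?thesis by (simp add: ssp_rho_skew[OF skew] divide_inverse_commute)
qed

lemma ssp_rho_error: "\<bar>ssp_rho S q0 k - \<sigma> 1\<bar> \<le> 1/2 * (tan_iter (2*k+1))\<^sup>2 * \<sigma> 1"
proof -
  define p where "p = 2*k+1"
  define a where "a = \<sigma> 1 ^ (2*p) * alpha_sq 1"
  have a: "0 < a" using sigma1_pos alpha_sq_1_pos by (simp add: a_def)
  have b: "0 \<le> tail_mass p" "0 \<le> tail_mass (p+1)" by (rule tail_mass_nonneg)+
  have "tail_mass (p+1) \<le> \<sigma> 2 ^ 2 * tail_mass p" using tail_mass_decay[of p 1] by simp
  also have "\<dots> \<le> \<sigma> 1 ^ 2 * tail_mass p"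
    using b sig12 sigma2_pos by (intro mult_right_mono power_mono) auto
  finally have c: "tail_mass (p+1) \<le> \<sigma> 1 ^ 2 * tail_mass p" .
  have "(ssp_rho S q0 k)\<^sup>2 = (norm (V (p+1)))\<^sup>2 / (norm (V p))\<^sup>2"
    by (simp add: ssp_rho_eq_quotient p_def power_divide)
  also have "\<dots> = (4 * (\<sigma> 1 ^ 2 * a + tail_mass (p+1))) / (4 * (a + tail_mass p))"
    unfolding norm_V_sq a_def by (simp add: power_add power_mult algebra_simps power2_eq_square)
  also have "\<dots> = (\<sigma> 1 ^ 2 * a + tail_mass (p+1)) / (a + tail_mass p)"
    by (rule mult_divide_mult_cancel_left) simp
  finally have rho_sq: "(ssp_rho S q0 k)\<^sup>2 = (\<sigma> 1 ^ 2 * a + tail_mass (p+1)) / (a + tail_mass p)" .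
  have tan_sq: "(tan_iter p)\<^sup>2 = tail_mass p / a"
    unfolding tan_iter_def a_def using b alpha1_norm_sq
    by (simp add: power_divide power_mult_distrib power_mult mult.commute)
  have "\<bar>ssp_rho S q0 k - \<sigma> 1\<bar> \<le> 1/2 * (tail_mass p / a) * \<sigma> 1"
  proof (rule abs_sub_le_of_sq_bounds)
    show "0 \<le> ssp_rho S q0 k" by (simp add: ssp_rho_eq_quotient)
    show "(ssp_rho S q0 k)\<^sup>2 \<le> (\<sigma> 1)\<^sup>2"
      unfolding rho_sq using a b c by (simp add: divide_le_eq algebra_simps)
    show "(\<sigma> 1)\<^sup>2 / (1 + tail_mass p / a) \<le> (ssp_rho S q0 k)\<^sup>2"
      unfolding rho_sq using a b by (simp add: field_simps)
  qed (use sigma1_pos a b in auto)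
  then show ?thesis unfolding p_def[symmetric] tan_sq .
qed

lemma tan_even_decay:
  "\<bar>tan (vangle (ssp S q0 (2*k)) x_even)\<bar> \<le> (\<sigma> 2 / \<sigma> 1) ^ (2*k) * \<bar>tan (vangle q0 x_even)\<bar>"
  using tan_vangle_ssp_even[of 0] tan_vangle_ssp_even[of "2*k"] tan_iter_decay[of 0 "2*k"]
  by (simp add: tan_iter_nonneg)

lemma tan_odd_decay_from_S_q0:
  assumes "1 \<le> k"
  shows "\<bar>tan (vangle (ssp S q0 (2*k-1)) x_odd)\<bar>
    \<le> (\<sigma> 2 / \<sigma> 1) ^ (2*(k-1)) * \<bar>tan (vangle (S *v q0) x_odd)\<bar>"
proof -
  have "S *v q0 = V 1" using V_Suc[of 0] by (simp add: V_0)
  then have "tan (vangle (S *v q0) x_odd) = tan_iter 1"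
    by (simp add: tan_vangle_V norm_x_odd inner_V_x_odd)
  moreover have "2*k-1 = 1 + 2*(k-1)" "odd (2*k-1)" using assms by auto
  ultimately show ?thesis
    using tan_vangle_ssp_odd[of "2*k-1"] tan_iter_decay[of 1 "2*(k-1)"] by (simp add: tan_iter_nonneg)
qed

lemma tan_odd_decay_from_q0:
  assumes "1 \<le> k"
  shows "\<bar>tan (vangle (ssp S q0 (2*k-1)) x_odd)\<bar>
    \<le> (\<sigma> 2 / \<sigma> 1) ^ (2*k-1) * \<bar>tan (vangle q0 x_even)\<bar>"
proof -
  have "odd (2*k-1)" using assms by presburger
  then show ?thesis
    using tan_vangle_ssp_odd[of "2*k-1"] tan_vangle_ssp_even[of 0] tan_iter_decay[of 0 "2*k-1"]
    by (simp add: tan_iter_nonneg)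
qed

lemma ssp_rho_bigo: "(\<lambda>k. ssp_rho S q0 k - \<sigma> 1) \<in> O(\<lambda>k. (\<sigma> 2 / \<sigma> 1) ^ (4*k))"
proof (rule bigoI[where c = "1/2 * (\<sigma> 2 / \<sigma> 1 * tan_iter 0)\<^sup>2 * \<sigma> 1"], rule always_eventually, rule allI)
  fix k :: nat
  define q where "q = \<sigma> 2 / \<sigma> 1"
  have "0 < q" using sigma1_pos sigma2_pos by (simp add: q_def)
  have "tan_iter (2*k+1) \<le> q ^ (2*k+1) * tan_iter 0"
    using tan_iter_decay[of 0 "2*k+1"] by (simp add: q_def)
  then have "(tan_iter (2*k+1))\<^sup>2 \<le> (q ^ (2*k+1) * tan_iter 0)\<^sup>2"
    using tan_iter_nonneg by (intro power_mono) auto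
  also have "\<dots> = (q * tan_iter 0)\<^sup>2 * q ^ (4*k)"
    by (simp add: power_mult_distrib power_add power_mult[symmetric] mult_ac)
  finally have "1/2 * (tan_iter (2*k+1))\<^sup>2 * \<sigma> 1 \<le> 1/2 * (q * tan_iter 0)\<^sup>2 * \<sigma> 1 * q ^ (4*k)"
    using sigma1_pos by (simp add: mult_ac)
  then show "norm (ssp_rho S q0 k - \<sigma> 1) \<le> 1/2 * (\<sigma> 2 / \<sigma> 1 * tan_iter 0)\<^sup>2 * \<sigma> 1 * norm ((\<sigma> 2 / \<sigma> 1) ^ (4*k))"
    using ssp_rho_error[of k] \<open>0 < q\<close> by (simp add: q_def)
qed

end

theorem theorem3p3:
  fixes S :: "real^'n^'n" and m :: nat
    and \<sigma> a1 a2 :: "nat \<Rightarrow> real" and u v :: "nat \<Rightarrow> real^'n" and q0 :: "real^'n"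
    and xo xe :: "real^'n"
  assumes dim: "CARD('n) = 2 * m" and m2: "2 \<le> m"
    and skew: "transpose S = - S" and nonsing: "invertible S"
    and sig12: "\<sigma> 2 < \<sigma> 1"
    and sigmono: "\<forall>j. 2 \<le> j \<and> j < m \<longrightarrow> \<sigma> (j+1) \<le> \<sigma> j"
    and sigpos: "\<forall>j\<in>{1..m}. 0 < \<sigma> j"
    and orth_uu: "\<forall>i\<in>{1..m}. \<forall>j\<in>{1..m}. u i \<bullet> u j = (if i = j then 1 else 0)"
    and orth_vv: "\<forall>i\<in>{1..m}. \<forall>j\<in>{1..m}. v i \<bullet> v j = (if i = j then 1 else 0)"
    and orth_uv: "\<forall>i\<in>{1..m}. \<forall>j\<in>{1..m}. u i \<bullet> v j = 0"
    and eig_v: "\<forall>j\<in>{1..m}. S *v v j = \<sigma> j *\<^sub>R u j"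
    and eig_u: "\<forall>j\<in>{1..m}. S *v u j = - (\<sigma> j *\<^sub>R v j)"
    and q0_unit: "norm q0 = 1"
    and q0_expand: "q0 = 2 *\<^sub>R (\<Sum>i\<in>{1..m}. a1 i *\<^sub>R u i - a2 i *\<^sub>R v i)"
    and alpha1: "(a1 1, a2 1) \<noteq> (0, 0)"
    and xo_def: "xo = (-1 / sqrt (a1 1 ^ 2 + a2 1 ^ 2)) *\<^sub>R (a1 1 *\<^sub>R v 1 + a2 1 *\<^sub>R u 1)"
    and xe_def: "xe = (1 / sqrt (a1 1 ^ 2 + a2 1 ^ 2)) *\<^sub>R (a1 1 *\<^sub>R u 1 - a2 1 *\<^sub>R v 1)"
  shows "norm xo = 1 \<and> norm xe = 1 \<and> xo \<bullet> xe = 0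
    \<and> norm ((complex_of_real (sqrt 2 / 2)) *s cvec xo xe) = 1
    \<and> cmat S *v ((complex_of_real (sqrt 2 / 2)) *s cvec xo xe)
        = (\<i> * complex_of_real (\<sigma> 1)) *s ((complex_of_real (sqrt 2 / 2)) *s cvec xo xe)
    \<and> norm ((complex_of_real (sqrt 2 / 2)) *s cvec xo (- xe)) = 1
    \<and> cmat S *v ((complex_of_real (sqrt 2 / 2)) *s cvec xo (- xe))
        = (- \<i> * complex_of_real (\<sigma> 1)) *s ((complex_of_real (sqrt 2 / 2)) *s cvec xo (- xe))
    \<and> (\<forall>k\<ge>1. \<bar>tan (vangle (ssp S q0 (2*k)) xe)\<bar>
          \<le> (\<sigma> 2 / \<sigma> 1) ^ (2*k) * \<bar>tan (vangle q0 xe)\<bar>)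
    \<and> (\<forall>k\<ge>1. \<bar>tan (vangle (ssp S q0 (2*k-1)) xo)\<bar>
          \<le> (\<sigma> 2 / \<sigma> 1) ^ (2*(k-1)) * \<bar>tan (vangle (S *v q0) xo)\<bar>)
    \<and> (\<forall>k\<ge>1. \<bar>tan (vangle (ssp S q0 (2*k-1)) xo)\<bar>
          \<le> (\<sigma> 2 / \<sigma> 1) ^ (2*k-1) * \<bar>tan (vangle q0 xe)\<bar>)
    \<and> (\<exists>g. g \<in> O(\<lambda>k. (tan (vangle (ssp S q0 (2*k+1)) xo)) ^ 4)
          \<and> (\<forall>k. \<bar>ssp_rho S q0 k - \<sigma> 1\<bar>
                 \<le> 1/2 * (tan (vangle (ssp S q0 (2*k+1)) xo)) ^ 2 * \<sigma> 1 + g k))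
    \<and> (\<lambda>k. ssp_rho S q0 k - \<sigma> 1) \<in> O(\<lambda>k. (\<sigma> 2 / \<sigma> 1) ^ (4*k))"
proof -
  interpret ssp_setting S m \<sigma> u v a1 a2 q0
    by unfold_locales (use assms in auto)
  have xo: "xo = x_odd" and xe: "xe = x_even"
    unfolding xo_def xe_def x_odd_def x_even_def alpha1_norm_def alpha_sq_def by simp_all
  have S_conj: "S *v x_odd = - ((- \<sigma> 1) *\<^sub>R (- x_even))" "S *v (- x_even) = (- \<sigma> 1) *\<^sub>R x_odd"
    using S_x_odd S_x_even by (simp_all add: linear_neg[OF matrix_vector_mul_linear])
  have tan_odd: "tan (vangle (ssp S q0 (2*k+1)) x_odd) = tan_iter (2*k+1)" for k
    by (rule tan_vangle_ssp_odd) simp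
  show ?thesis
    unfolding xo xe
    using norm_x_odd norm_x_even inner_x_odd_x_even norm_sqrt2_half_cvec
      cvec_eigenvector[OF S_x_odd S_x_even] cvec_eigenvector[OF S_conj]
      tan_even_decay tan_odd_decay_from_S_q0 tan_odd_decay_from_q0 tan_odd ssp_rho_error ssp_rho_bigo
    by (intro conjI exI[of _ "\<lambda>_. 0"]) auto
qed

end
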